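(* Let $N\ge1$, let $a_1>a_2>a_3$ be real numbers, let $p_i,c_i,c'_i$ ($1\le i\le N$) be arbitrary real numbers and $s$ a fixed integer. For integers $l,m,n,s$ put $\eta_i(l,m,n,s)=p_is+\max(0,p_i-a_1)l+\max(0,p_i-a_2)m+\max(0,p_i-a_3)n+c_i$, $\eta'_i(l,m,n,s)=-p_is+\max(0,-p_i-a_1)l+\max(0,-p_i-a_2)m+\max(0,-p_i-a_3)n+c'_i$, $\phi_i(l,m,n,s)=\max(\eta_i(l,m,n,s),\eta'_i(l,m,n,s))$, and $\tau(l,m,n)=\max[\phi_i(l,m,n,s+j-1)]_{1\le i,j\le N}$. Then $\tau$ satisfies the ultradiscrete KP equation \[ \tau(l,m+1,n)+\tau(l+1,m,n+1)-a_2=\max\bigl(\tau(l+1,m,n)+\tau(l,m+1,n+1)-a_1,\ \tau(l,m,n+1)+\tau(l+1,m+1,n)-a_2\bigr) \] for all integers $l,m,n$.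
   Context: Ultradiscrete permanent (UP): for a real $N\times N$ matrix $A=(a_{ij})$, $\max[a_{ij}]_{1\le i,j\le N}\equiv\max_{\pi}\sum_{i=1}^N a_{i\pi(i)}$, the maximum over all permutations $\pi$ of $\{1,\dots,N\}$. *)

theory Defs
  imports "HOL-Combinatorics.Permutations" Complex_Main
begin

definition UP :: "nat \<Rightarrow> (nat \<Rightarrow> nat \<Rightarrow> real) \<Rightarrow> real" where
  "UP N a = Max {(\<Sum>i=1..N. a i (\<pi> i)) | \<pi>. \<pi> permutes {1..N}}"

definition eta :: "real \<Rightarrow> real \<Rightarrow> real \<Rightarrow> real \<Rightarrow> real \<Rightarrow> int \<Rightarrow> int \<Rightarrow> int \<Rightarrow> int \<Rightarrow> real" where
  "eta a1 a2 a3 p c l m n s = p * of_int s + max 0 (p - a1) * of_int l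
     + max 0 (p - a2) * of_int m + max 0 (p - a3) * of_int n + c"

definition eta' :: "real \<Rightarrow> real \<Rightarrow> real \<Rightarrow> real \<Rightarrow> real \<Rightarrow> int \<Rightarrow> int \<Rightarrow> int \<Rightarrow> int \<Rightarrow> real" where
  "eta' a1 a2 a3 p c' l m n s = - p * of_int s + max 0 (- p - a1) * of_int l
     + max 0 (- p - a2) * of_int m + max 0 (- p - a3) * of_int n + c'"

definition phi :: "real \<Rightarrow> real \<Rightarrow> real \<Rightarrow> real \<Rightarrow> real \<Rightarrow> real \<Rightarrow> int \<Rightarrow> int \<Rightarrow> int \<Rightarrow> int \<Rightarrow> real" where
  "phi a1 a2 a3 p c c' l m n s = max (eta a1 a2 a3 p c l m n s) (eta' a1 a2 a3 p c' l m n s)"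

definition tau :: "nat \<Rightarrow> real \<Rightarrow> real \<Rightarrow> real \<Rightarrow> (nat \<Rightarrow> real) \<Rightarrow> (nat \<Rightarrow> real) \<Rightarrow> (nat \<Rightarrow> real)
    \<Rightarrow> int \<Rightarrow> int \<Rightarrow> int \<Rightarrow> int \<Rightarrow> real" where
  "tau N a1 a2 a3 p c c' s l m n =
     UP N (\<lambda>i j. phi a1 a2 a3 (p i) (c i) (c' i) l m n (s + int j - 1))"

end

theory Submission
  imports Defs
begin

text \<open>Each entry phi i (s + j - 1) is the larger of two affine functions of the column index j,
  so tau is the maximum, over a choice of branch for every row, of a rearrangement value in which
  the rows are sorted by their slopes \<plusminus>p i. Each side of the KP equation is then a maximum of sums
  of two such values taken at complementary shifts of (l, m, n). For a pair of branch choices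
  only the set D of rows where the two choices differ matters: up to a part common to all three
  sides, the contribution of D is one and the same function of the signs s \<in> {-1, 1}^D of the
  slopes on D, except for a term depending on the side, k = 0 for the left-hand side and
  k = 1, 2 for the two terms of the maximum. The equation thus reduces to a statement on sign
  vectors: the largest value for k = 0 dominates every value for k = 1, 2 and is attained by
  one of them. This is proved by inserting the rows of D in order of increasing magnitude |p i|,
  keeping track of how the sign sum of the rows already inserted interacts with those to come.\<close>

definition clip :: "real \<Rightarrow> real \<Rightarrow> real" where
  "clip a x = max (-x) (min (-a) x)"

lemma max0_diff_eq_clip: "0 \<le> x \<Longrightarrow> max 0 (x - a) - max 0 (-x - a) = x + clip a x"
  unfolding clip_def by (smt (z3))

lemma clip_diff_bounds:
  "0 \<le> x \<Longrightarrow> x \<le> y \<Longrightarrow> -(y - x) \<le> clip a y - clip a x \<and> clip a y - clip a x \<le> y - x"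
  unfolding clip_def by (smt (z3))

lemma clip_diff_antimono:
  "0 \<le> x \<Longrightarrow> x \<le> y \<Longrightarrow> b \<le> a \<Longrightarrow> clip a y - clip a x \<le> clip b y - clip b x"
  unfolding clip_def by (smt (z3))

definition pairwise_max_sum :: "nat set \<Rightarrow> (nat \<Rightarrow> real) \<Rightarrow> real" where
  "pairwise_max_sum I q = (\<Sum>i\<in>I. \<Sum>j\<in>I. if j < i then max (q i) (q j) else 0)"

lemma sum_oriented_pairs:
  fixes q :: "nat \<Rightarrow> real"
  assumes irrefl: "\<And>i. \<not> R i i"
    and total: "\<And>i j. i \<noteq> j \<Longrightarrow> R j i \<longleftrightarrow> \<not> R i j"
  shows "(\<Sum>i\<in>I. \<Sum>j\<in>I. if R j i then q i else 0)
       = (\<Sum>i\<in>I. \<Sum>j\<in>I. if j < i then (if R j i then q i else q j) else 0)"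
proof -
  have "(\<Sum>i\<in>I. \<Sum>j\<in>I. if R j i then q i else 0)
      = (\<Sum>i\<in>I. \<Sum>j\<in>I. (if j < i \<and> R j i then q i else 0) + (if i < j \<and> R j i then q i else 0))"
  proof (intro sum.cong refl)
    fix i j
    show "(if R j i then q i else 0) = (if j < i \<and> R j i then q i else 0) + (if i < j \<and> R j i then q i else 0)"
      using irrefl[of i] by (cases i j rule: linorder_cases) auto
  qed
  also have "\<dots> = (\<Sum>i\<in>I. \<Sum>j\<in>I. if j < i \<and> R j i then q i else 0)
       + (\<Sum>i\<in>I. \<Sum>j\<in>I. if i < j \<and> R j i then q i else 0)"
    by (simp add: sum.distrib)
  also have "(\<Sum>i\<in>I. \<Sum>j\<in>I. if i < j \<and> R j i then q i else 0)
      = (\<Sum>j\<in>I. \<Sum>i\<in>I. if i < j \<and> R j i then q i else 0)"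
    by (rule sum.swap)
  also have "\<dots> = (\<Sum>i\<in>I. \<Sum>j\<in>I. if j < i \<and> \<not> R j i then q j else 0)"
  proof (intro sum.cong refl)
    fix a b
    show "(if b < a \<and> R a b then q b else 0) = (if b < a \<and> \<not> R b a then q b else 0)"
      using total[of b a] by (cases "b < a") auto
  qed
  finally show ?thesis
    by (simp add: sum.distrib[symmetric]) (intro sum.cong refl, auto)
qed

lemma sum_weighted_by_rank:
  fixes q :: "nat \<Rightarrow> real"
  assumes "finite I" and "\<And>i. i \<in> I \<Longrightarrow> r i = 1 + card {j\<in>I. R j i}"
  shows "(\<Sum>i\<in>I. q i * real (r i)) = (\<Sum>i\<in>I. q i) + (\<Sum>i\<in>I. \<Sum>j\<in>I. if R j i then q i else 0)"
proof -
  have "(\<Sum>j\<in>I. if R j i then q i else 0) = q i * real (card {j\<in>I. R j i})" for i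
    using assms(1) by (simp add: sum.inter_filter[symmetric])
  then show ?thesis using assms(2) by (simp add: sum.distrib algebra_simps)
qed

lemma permutes_rank:
  assumes perm: "\<pi> permutes {1..N}" and i: "i \<in> {1..N}"
  shows "\<pi> i = 1 + card {j\<in>{1..N}. \<pi> j < \<pi> i}"
proof -
  have \<pi>i: "\<pi> i \<in> {1..N}" using permutes_in_image[OF perm] i by simp
  have "\<pi> ` {j\<in>{1..N}. \<pi> j < \<pi> i} = {1..<\<pi> i}"
  proof
    show "\<pi> ` {j\<in>{1..N}. \<pi> j < \<pi> i} \<subseteq> {1..<\<pi> i}"
      using permutes_in_image[OF perm] by fastforce
    show "{1..<\<pi> i} \<subseteq> \<pi> ` {j\<in>{1..N}. \<pi> j < \<pi> i}"
    proof
      fix x assume x: "x \<in> {1..<\<pi> i}"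
      then have "x \<in> \<pi> ` {1..N}" using \<pi>i permutes_image[OF perm] by auto
      then show "x \<in> \<pi> ` {j\<in>{1..N}. \<pi> j < \<pi> i}" using x by auto
    qed
  qed
  moreover have "inj_on \<pi> {j\<in>{1..N}. \<pi> j < \<pi> i}"
    using permutes_inj_on[OF perm] by (rule inj_on_subset) auto
  ultimately have "card {j\<in>{1..N}. \<pi> j < \<pi> i} = \<pi> i - 1"
    using card_image by fastforce
  then show ?thesis using \<pi>i by simp
qed

text \<open>Since \<pi> i = 1 + #{j. \<pi> j < \<pi> i}, each pair {i, j} contributes the q-value of its
  \<pi>-larger element, hence at most max (q i) (q j); equality holds when \<pi> sorts the q i.\<close>
lemma permutes_weighted_sum_le:
  fixes q :: "nat \<Rightarrow> real"
  assumes perm: "\<pi> permutes {1..N}"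
  shows "(\<Sum>i\<in>{1..N}. q i * real (\<pi> i)) \<le> (\<Sum>i\<in>{1..N}. q i) + pairwise_max_sum {1..N} q"
proof -
  let ?R = "\<lambda>j i. \<pi> j < \<pi> i"
  have irrefl: "\<not> ?R i i" for i by simp
  have total: "?R j i \<longleftrightarrow> \<not> ?R i j" if "i \<noteq> j" for i j
  proof -
    have "\<pi> i \<noteq> \<pi> j" using permutes_inj[OF perm] that by (auto dest: injD)
    then show ?thesis by auto
  qed
  have "(\<Sum>i\<in>{1..N}. q i * real (\<pi> i))
      = (\<Sum>i\<in>{1..N}. q i) + (\<Sum>i\<in>{1..N}. \<Sum>j\<in>{1..N}. if ?R j i then q i else 0)"
    by (rule sum_weighted_by_rank, simp, rule permutes_rank[OF perm])
  also have "(\<Sum>i\<in>{1..N}. \<Sum>j\<in>{1..N}. if ?R j i then q i else 0)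
      = (\<Sum>i\<in>{1..N}. \<Sum>j\<in>{1..N}. if j < i then (if ?R j i then q i else q j) else 0)"
    by (rule sum_oriented_pairs[OF irrefl total])
  also have "\<dots> \<le> pairwise_max_sum {1..N} q"
    unfolding pairwise_max_sum_def by (intro sum_mono) auto
  finally show ?thesis by simp
qed

lemma rank_permutes:
  assumes irrefl: "\<And>i. \<not> R i i" and trans: "\<And>i j k. R k j \<Longrightarrow> R j i \<Longrightarrow> R k i"
    and total: "\<And>i j. i \<noteq> j \<Longrightarrow> R j i \<longleftrightarrow> \<not> R i j"
  shows "(\<lambda>i. if i \<in> {1..N} then 1 + card {j\<in>{1..N}. R j i} else i) permutes {1..N}"
    (is "?r permutes ?I")
proof (rule bij_imp_permutes)
  have into: "?r i \<in> ?I" if i: "i \<in> ?I" for i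
  proof -
    have "card {j\<in>?I. R j i} \<le> card (?I - {i})" using irrefl by (intro card_mono) auto
    then show ?thesis using i by auto
  qed
  have less: "?r j < ?r i" if "i \<in> ?I" "j \<in> ?I" "R j i" for i j
  proof -
    have "{k\<in>?I. R k j} \<subseteq> {k\<in>?I. R k i}" "j \<in> {k\<in>?I. R k i} - {k\<in>?I. R k j}"
      using trans irrefl that by auto
    then have "{k\<in>?I. R k j} \<subset> {k\<in>?I. R k i}" by blast
    then show ?thesis using that by (simp add: psubset_card_mono)
  qed
  have "inj_on ?r ?I"
  proof (rule inj_onI)
    fix i j assume "i \<in> ?I" "j \<in> ?I" "?r i = ?r j"
    then show "i = j" using less[of i j] less[of j i] total[of i j] by (cases "i = j") auto
  qed
  moreover have "?r ` ?I = ?I"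
    using card_image[OF \<open>inj_on ?r ?I\<close>] into by (intro card_subset_eq) auto
  ultimately show "bij_betw ?r ?I ?I" unfolding bij_betw_def by blast
qed (simp only: if_not_P if_False)

lemma permutes_weighted_sum_attained:
  fixes q :: "nat \<Rightarrow> real"
  obtains \<pi> where "\<pi> permutes {1..N}"
    "(\<Sum>i\<in>{1..N}. q i * real (\<pi> i)) = (\<Sum>i\<in>{1..N}. q i) + pairwise_max_sum {1..N} q"
proof -
  define R where "R j i \<longleftrightarrow> q j < q i \<or> (q j = q i \<and> j < i)" for j i
  define r where "r i = (if i \<in> {1..N} then 1 + card {j\<in>{1..N}. R j i} else i)" for i
  have irrefl: "\<not> R i i" for i unfolding R_def by simp
  have total: "R j i \<longleftrightarrow> \<not> R i j" if "i \<noteq> j" for i j using that unfolding R_def by auto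
  have "r permutes {1..N}"
    unfolding r_def by (rule rank_permutes) (auto simp: R_def)
  moreover have "(\<Sum>i\<in>{1..N}. q i * real (r i))
      = (\<Sum>i\<in>{1..N}. q i) + (\<Sum>i\<in>{1..N}. \<Sum>j\<in>{1..N}. if R j i then q i else 0)"
    by (rule sum_weighted_by_rank) (simp_all add: r_def)
  moreover have "(\<Sum>i\<in>{1..N}. \<Sum>j\<in>{1..N}. if R j i then q i else 0)
      = (\<Sum>i\<in>{1..N}. \<Sum>j\<in>{1..N}. if j < i then (if R j i then q i else q j) else 0)"
    by (rule sum_oriented_pairs[OF irrefl total])
  moreover have "\<dots> = pairwise_max_sum {1..N} q"
    unfolding pairwise_max_sum_def by (intro sum.cong refl) (auto simp: R_def)
  ultimately show ?thesis using that by simp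
qed

lemma UP_ge: "\<pi> permutes {1..N} \<Longrightarrow> (\<Sum>i=1..N. a i (\<pi> i)) \<le> UP N a"
  unfolding UP_def by (rule Max_ge) (auto simp: finite_permutations)

lemma UP_attained:
  obtains \<pi> where "\<pi> permutes {1..N}" "UP N a = (\<Sum>i=1..N. a i (\<pi> i))"
proof -
  have "UP N a \<in> {(\<Sum>i=1..N. a i (\<pi> i)) | \<pi>. \<pi> permutes {1..N}}"
    unfolding UP_def by (rule Max_in) (auto simp: finite_permutations intro: permutes_id)
  then show ?thesis using that by blast
qed

definition choice_value :: "nat \<Rightarrow> (bool \<Rightarrow> nat \<Rightarrow> real) \<Rightarrow> (bool \<Rightarrow> nat \<Rightarrow> real) \<Rightarrow> (nat \<Rightarrow> bool) \<Rightarrow> real"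
  where "choice_value N b q \<epsilon> =
    (\<Sum>i\<in>{1..N}. b (\<epsilon> i) i + q (\<epsilon> i) i) + pairwise_max_sum {1..N} (\<lambda>i. q (\<epsilon> i) i)"

lemma choice_value_le_UP:
  "choice_value N b q \<epsilon> \<le> UP N (\<lambda>i j. max (b True i + q True i * real j) (b False i + q False i * real j))"
proof -
  obtain \<pi> where perm: "\<pi> permutes {1..N}" and eq: "(\<Sum>i\<in>{1..N}. q (\<epsilon> i) i * real (\<pi> i))
      = (\<Sum>i\<in>{1..N}. q (\<epsilon> i) i) + pairwise_max_sum {1..N} (\<lambda>i. q (\<epsilon> i) i)"
    by (rule permutes_weighted_sum_attained)
  have "choice_value N b q \<epsilon> = (\<Sum>i=1..N. b (\<epsilon> i) i + q (\<epsilon> i) i * real (\<pi> i))"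
    unfolding choice_value_def using eq by (simp add: sum.distrib)
  also have "\<dots> \<le> (\<Sum>i=1..N. max (b True i + q True i * real (\<pi> i)) (b False i + q False i * real (\<pi> i)))"
    by (intro sum_mono) (metis (full_types) max.cobounded1 max.cobounded2)
  also have "\<dots> \<le> UP N (\<lambda>i j. max (b True i + q True i * real j) (b False i + q False i * real j))"
    by (rule UP_ge[OF perm])
  finally show ?thesis .
qed

lemma UP_eq_choice_value:
  obtains \<epsilon> where
    "UP N (\<lambda>i j. max (b True i + q True i * real j) (b False i + q False i * real j)) = choice_value N b q \<epsilon>"
proof -
  let ?a = "\<lambda>i j. max (b True i + q True i * real j) (b False i + q False i * real j)"
  obtain \<pi> where perm: "\<pi> permutes {1..N}" and up: "UP N ?a = (\<Sum>i=1..N. ?a i (\<pi> i))"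
    by (rule UP_attained)
  define \<epsilon> where "\<epsilon> i \<longleftrightarrow> b False i + q False i * real (\<pi> i) \<le> b True i + q True i * real (\<pi> i)" for i
  have "?a i (\<pi> i) = b (\<epsilon> i) i + q (\<epsilon> i) i * real (\<pi> i)" for i
    unfolding \<epsilon>_def
    by (cases "b False i + q False i * real (\<pi> i) \<le> b True i + q True i * real (\<pi> i)") (simp_all add: max_def)
  then have "UP N ?a = (\<Sum>i\<in>{1..N}. b (\<epsilon> i) i) + (\<Sum>i\<in>{1..N}. q (\<epsilon> i) i * real (\<pi> i))"
    using up by (simp add: sum.distrib)
  also have "\<dots> \<le> choice_value N b q \<epsilon>"
    using permutes_weighted_sum_le[OF perm] unfolding choice_value_def by (simp add: sum.distrib)
  finally show ?thesis using choice_value_le_UP[of N b q \<epsilon>] that by (meson antisym)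
qed

lemma sum_lower_pairs_abs:
  fixes x :: "nat \<Rightarrow> real"
  shows "(\<Sum>i\<in>D. \<Sum>j\<in>D. if j < i then \<bar>x i - x j\<bar> else 0) = (\<Sum>i\<in>D. \<Sum>j\<in>D. \<bar>x i - x j\<bar>) / 2"
proof -
  have "(\<Sum>i\<in>D. \<Sum>j\<in>D. \<bar>x i - x j\<bar>)
      = (\<Sum>i\<in>D. \<Sum>j\<in>D. (if j < i then \<bar>x i - x j\<bar> else 0) + (if i < j then \<bar>x i - x j\<bar> else 0))"
  proof (intro sum.cong refl)
    fix i j
    show "\<bar>x i - x j\<bar> = (if j < i then \<bar>x i - x j\<bar> else 0) + (if i < j then \<bar>x i - x j\<bar> else 0)"
      by (cases i j rule: linorder_cases) auto
  qed
  also have "\<dots> = (\<Sum>i\<in>D. \<Sum>j\<in>D. if j < i then \<bar>x i - x j\<bar> else 0)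
      + (\<Sum>i\<in>D. \<Sum>j\<in>D. if i < j then \<bar>x i - x j\<bar> else 0)"
    by (simp add: sum.distrib)
  also have "(\<Sum>i\<in>D. \<Sum>j\<in>D. if i < j then \<bar>x i - x j\<bar> else 0)
      = (\<Sum>j\<in>D. \<Sum>i\<in>D. if i < j then \<bar>x i - x j\<bar> else 0)"
    by (rule sum.swap)
  also have "\<dots> = (\<Sum>i\<in>D. \<Sum>j\<in>D. if j < i then \<bar>x i - x j\<bar> else 0)"
    by (intro sum.cong refl) (simp add: abs_minus_commute)
  finally show ?thesis by simp
qed

lemma sum_lower_pairs_restrict:
  fixes x :: "nat \<Rightarrow> real"
  assumes "D \<subseteq> I" "finite I"
  shows "(\<Sum>i\<in>I. \<Sum>j\<in>I. if j < i then (if i \<in> D \<and> j \<in> D then \<bar>x i - x j\<bar> else 0) else 0)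
       = (\<Sum>i\<in>D. \<Sum>j\<in>D. if j < i then \<bar>x i - x j\<bar> else 0)"
proof -
  have "(\<Sum>j\<in>I. if j < i then (if i \<in> D \<and> j \<in> D then \<bar>x i - x j\<bar> else 0) else 0)
      = (if i \<in> D then (\<Sum>j\<in>D. if j < i then \<bar>x i - x j\<bar> else 0) else 0)" for i
  proof (cases "i \<in> D")
    case True
    then have "(\<Sum>j\<in>I. if j < i then (if i \<in> D \<and> j \<in> D then \<bar>x i - x j\<bar> else 0) else 0)
        = (\<Sum>j\<in>I. if j \<in> D then (if j < i then \<bar>x i - x j\<bar> else 0) else 0)"
      by (intro sum.cong refl) auto
    also have "\<dots> = (\<Sum>j\<in>D. if j < i then \<bar>x i - x j\<bar> else 0)"
      using assms sum.inter_restrict[of I "\<lambda>j. if j < i then \<bar>x i - x j\<bar> else 0" D]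
      by (simp add: Int_absorb1)
    finally show ?thesis using True by simp
  qed (auto intro: sum.neutral)
  then show ?thesis
    using assms sum.inter_restrict[of I "\<lambda>i. \<Sum>j\<in>D. if j < i then \<bar>x i - x j\<bar> else 0" D]
    by (simp add: Int_absorb1)
qed

locale kp_parameters =
  fixes a1 a2 a3 :: real
  assumes a2_less_a1: "a2 < a1" and a3_less_a2: "a3 < a2"
begin

text \<open>gain k q is the contribution of a row with slope q on which the two branch choices differ,
  for the pair of shifts (0,1,0), (1,0,1) if k = 0, (1,0,0), (0,1,1) if k = 1 and
  (0,0,1), (1,1,0) if k = 2.\<close>
definition gain :: "nat \<Rightarrow> real \<Rightarrow> real" where
  "gain k q = (if k = 0 then max 0 (q - a2) + max 0 (-q - a1) + max 0 (-q - a3)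
              else if k = 1 then max 0 (q - a1) + max 0 (-q - a2) + max 0 (-q - a3)
              else max 0 (q - a3) + max 0 (-q - a1) + max 0 (-q - a2))"

definition offset :: "nat \<Rightarrow> real" where
  "offset k = (if k = 1 then a1 else a2)"

definition gain_odd :: "nat \<Rightarrow> real \<Rightarrow> real" where
  "gain_odd k x = (gain k x - gain k (-x)) / 2"

definition gain_even :: "real \<Rightarrow> real" where
  "gain_even x = (gain 0 x + gain 0 (-x)) / 2"

definition tail :: "nat \<Rightarrow> real \<Rightarrow> int \<Rightarrow> real" where
  "tail k x m = of_int m * gain_odd k x - x * (of_int m)^2 / 2 + clip (offset k) x"

lemma gain_split: "gain k x = gain_even x + gain_odd k x"
  unfolding gain_even_def gain_odd_def gain_def by (auto simp: field_simps)

lemma gain_odd_neg: "gain_odd k (-x) = - gain_odd k x"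
  unfolding gain_odd_def by (simp add: field_simps)

lemma gain_even_neg: "gain_even (-x) = gain_even x"
  unfolding gain_even_def by simp

lemma gain_odd_clip:
  assumes "0 \<le> x"
  shows "gain_odd 0 x = (-x - clip a1 x + clip a2 x - clip a3 x) / 2"
    and "gain_odd 1 x = (-x + clip a1 x - clip a2 x - clip a3 x) / 2"
    and "gain_odd 2 x = (-x - clip a1 x - clip a2 x + clip a3 x) / 2"
  using max0_diff_eq_clip[OF assms, of a1] max0_diff_eq_clip[OF assms, of a2]
    max0_diff_eq_clip[OF assms, of a3]
  unfolding gain_odd_def gain_def by simp_all

lemma tail_vanishes: "tail k 0 m = 0"
  unfolding tail_def gain_odd_def clip_def by simp

lemma tail_sum_zero: "tail k x 0 = clip (offset k) x"
  unfolding tail_def by simp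

lemma tail_expand:
  assumes "0 \<le> x" "k \<le> 2"
  shows "tail k x m = of_int m * (if k = 0 then (-x - clip a1 x + clip a2 x - clip a3 x) / 2
     else if k = 1 then (-x + clip a1 x - clip a2 x - clip a3 x) / 2
     else (-x - clip a1 x - clip a2 x + clip a3 x) / 2) - x * (of_int m)^2 / 2
     + (if k = 1 then clip a1 x else clip a2 x)"
proof -
  have "k = 0 \<or> k = 1 \<or> k = 2" using assms by auto
  then show ?thesis
    using gain_odd_clip[OF assms(1)] unfolding tail_def offset_def by auto
qed

lemma clip_diff_chain:
  assumes "0 \<le> x" "x \<le> y"
  shows "-(y - x) \<le> clip a1 y - clip a1 x" "clip a1 y - clip a1 x \<le> clip a2 y - clip a2 x"
    "clip a2 y - clip a2 x \<le> clip a3 y - clip a3 x" "clip a3 y - clip a3 x \<le> y - x"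
  using clip_diff_bounds[OF assms, of a1] clip_diff_bounds[OF assms, of a3]
    clip_diff_antimono[OF assms, of a2 a1] clip_diff_antimono[OF assms, of a3 a2]
    a2_less_a1 a3_less_a2 by auto

lemma gain_odd_diff_bounds:
  assumes "0 \<le> x" "x \<le> y" "k \<le> 2"
  shows "-2 * (y - x) \<le> gain_odd k y - gain_odd k x" "gain_odd k y - gain_odd k x \<le> y - x"
proof -
  have "k = 0 \<or> k = 1 \<or> k = 2" using assms by auto
  then show "-2 * (y - x) \<le> gain_odd k y - gain_odd k x" "gain_odd k y - gain_odd k x \<le> y - x"
    using clip_diff_chain[OF assms(1,2)] gain_odd_clip[of x] gain_odd_clip[of y] assms by auto
qed

definition parity_rep :: "int \<Rightarrow> int" where
  "parity_rep m = (if even m then 0 else -1)"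

lemma parity_rep_shift: "parity_rep (m - 2) = parity_rep m" "parity_rep (m + 2) = parity_rep m"
  unfolding parity_rep_def by auto

lemma tail_diff_le_small:
  assumes "0 \<le> x" "x \<le> y" "k \<le> 2" "m \<in> {-2, -1, 0, 1}"
  shows "tail k y m - tail k x m \<le> tail 0 y (parity_rep m) - tail 0 x (parity_rep m)"
proof -
  note c = clip_diff_chain[OF assms(1,2)]
  have y: "0 \<le> y" using assms by auto
  have k: "k = 0 \<or> k = 1 \<or> k = 2" using assms by auto
  have p: "parity_rep (-2) = 0" "parity_rep (-1) = -1" "parity_rep 0 = 0" "parity_rep 1 = -1"
    by (auto simp: parity_rep_def)
  have "m = -2 \<or> m = -1 \<or> m = 0 \<or> m = 1" using assms(4) by auto
  with k show ?thesis
    apply (elim disjE)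
    apply (simp_all add: p tail_expand[OF assms(1)] tail_expand[OF y] power2_eq_square field_simps)
    apply (use c in linarith)+
    done
qed

text \<open>For m \<ge> 2 the increment at m exceeds the one at m - 2 by
  2 (gain_odd k y - gain_odd k x) - (y - x) (2 m - 2) \<le> (y - x) (4 - 2 m) \<le> 0,
  and symmetrically for m \<le> -3; so only -2 \<le> m \<le> 1 needs to be checked.\<close>
lemma tail_diff_le:
  assumes "0 \<le> x" "x \<le> y" "k \<le> 2"
  shows "tail k y m - tail k x m \<le> tail 0 y (parity_rep m) - tail 0 x (parity_rep m)"
proof (induction "nat \<bar>m\<bar>" arbitrary: m rule: less_induct)
  case less
  note g = gain_odd_diff_bounds[OF assms]
  show ?case
  proof (cases "m \<in> {-2, -1, 0, 1}")
    case True
    then show ?thesis using tail_diff_le_small[OF assms] by blast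
  next
    case False
    then consider "m \<ge> 2" | "m \<le> -3" by fastforce
    then show ?thesis
    proof cases
      case 1
      then have "nat \<bar>m - 2\<bar> < nat \<bar>m\<bar>" by auto
      then have "tail k y (m - 2) - tail k x (m - 2) \<le> tail 0 y (parity_rep m) - tail 0 x (parity_rep m)"
        using less parity_rep_shift by metis
      moreover have "(y - x) * (2 * of_int m - 4) \<ge> 0" using 1 assms by (intro mult_nonneg_nonneg) auto
      moreover have "(tail k y m - tail k x m) - (tail k y (m - 2) - tail k x (m - 2))
          = 2 * (gain_odd k y - gain_odd k x) - (y - x) * (2 * of_int m - 2)"
        unfolding tail_def by (simp add: power2_eq_square field_simps)
      ultimately show ?thesis using g by (simp add: algebra_simps)
    next
      case 2
      then have "nat \<bar>m + 2\<bar> < nat \<bar>m\<bar>" by auto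
      then have "tail k y (m + 2) - tail k x (m + 2) \<le> tail 0 y (parity_rep m) - tail 0 x (parity_rep m)"
        using less parity_rep_shift by metis
      moreover have "(y - x) * (- 2 * of_int m - 6) \<ge> 0" using 2 assms by (intro mult_nonneg_nonneg) auto
      moreover have "(tail k y m - tail k x m) - (tail k y (m + 2) - tail k x (m + 2))
          = -2 * (gain_odd k y - gain_odd k x) + (y - x) * (2 * of_int m + 2)"
        unfolding tail_def by (simp add: power2_eq_square field_simps)
      ultimately show ?thesis using g by (simp add: algebra_simps)
    qed
  qed
qed

definition tight1 :: "real \<Rightarrow> real \<Rightarrow> bool" where
  "tight1 x y \<longleftrightarrow> clip a1 y - clip a1 x = clip a2 y - clip a2 x \<or> clip a3 y - clip a3 x = y - x"

definition tight2 :: "real \<Rightarrow> real \<Rightarrow> bool" where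
  "tight2 x y \<longleftrightarrow> clip a1 y - clip a1 x = -(y - x) \<or> clip a2 y - clip a2 x = clip a3 y - clip a3 x"

definition safe1 :: "real \<Rightarrow> bool" where
  "safe1 Q \<longleftrightarrow> (\<forall>x y. 0 \<le> x \<longrightarrow> x \<le> y \<longrightarrow> y \<le> Q \<longrightarrow> tight1 x y)"

definition safe2 :: "real \<Rightarrow> bool" where
  "safe2 Q \<longleftrightarrow> (\<forall>x y. 0 \<le> x \<longrightarrow> x \<le> y \<longrightarrow> y \<le> Q \<longrightarrow> tight2 x y)"

lemma tail1_diff_eq_tail0:
  "0 \<le> x \<Longrightarrow> 0 \<le> y \<Longrightarrow> tail 1 y (-1) - tail 1 x (-1) = tail 0 y (-1) - tail 0 x (-1)"
  using tail_expand[of x 1 "-1"] tail_expand[of y 1 "-1"] tail_expand[of x 0 "-1"]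
    tail_expand[of y 0 "-1"]
  by (simp add: field_simps)

lemma tail2_diff_eq_tail0: "tail 2 y 0 - tail 2 x 0 = tail 0 y 0 - tail 0 x 0"
  unfolding tail_sum_zero offset_def by simp

lemma tight1_tail_eq:
  assumes "0 \<le> x" "0 \<le> y" "tight1 x y"
  obtains v where "v = 0 \<or> v = -2" "tail 1 y v - tail 1 x v = tail 0 y 0 - tail 0 x 0"
proof -
  have "tail 1 y 0 - tail 1 x 0 - (tail 0 y 0 - tail 0 x 0)
      = (clip a1 y - clip a1 x) - (clip a2 y - clip a2 x)"
    "tail 1 y (-2) - tail 1 x (-2) - (tail 0 y 0 - tail 0 x 0) = (clip a3 y - clip a3 x) - (y - x)"
    using tail_expand[OF assms(1), of 1 0] tail_expand[OF assms(2), of 1 0]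
      tail_expand[OF assms(1), of 0 0] tail_expand[OF assms(2), of 0 0]
      tail_expand[OF assms(1), of 1 "-2"] tail_expand[OF assms(2), of 1 "-2"]
    by (simp_all add: field_simps power2_eq_square)
  then show ?thesis using assms(3) that unfolding tight1_def by force
qed

lemma tight2_tail_eq:
  assumes "0 \<le> x" "0 \<le> y" "tight2 x y"
  obtains v where "v = 1 \<or> v = -1" "tail 2 y v - tail 2 x v = tail 0 y (-1) - tail 0 x (-1)"
proof -
  have "tail 2 y 1 - tail 2 x 1 - (tail 0 y (-1) - tail 0 x (-1)) = -(y - x) - (clip a1 y - clip a1 x)"
    "tail 2 y (-1) - tail 2 x (-1) - (tail 0 y (-1) - tail 0 x (-1))
      = (clip a2 y - clip a2 x) - (clip a3 y - clip a3 x)"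
    using tail_expand[OF assms(1), of 2 1] tail_expand[OF assms(2), of 2 1]
      tail_expand[OF assms(1), of 0 "-1"] tail_expand[OF assms(2), of 0 "-1"]
      tail_expand[OF assms(1), of 2 "-1"] tail_expand[OF assms(2), of 2 "-1"]
    by (simp_all add: field_simps power2_eq_square)
  then show ?thesis using assms(3) that unfolding tight2_def by force
qed

lemma offset_tail_le: "0 \<le> Q \<Longrightarrow> - offset k - tail k Q 0 \<le> - offset 0 - tail 0 Q 0"
  unfolding tail_sum_zero offset_def clip_def using a2_less_a1 by auto

lemma safe2_of_not_tight1:
  assumes "0 \<le> Q" "Q \<le> y" "\<not> tight1 Q y"
  shows "safe2 Q"
  unfolding safe2_def tight2_def
proof (intro allI impI)
  fix x z assume xz: "0 \<le> x" "x \<le> z" "z \<le> Q"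
  have "Q < y" using assms unfolding tight1_def by (cases "Q = y") auto
  show "clip a1 z - clip a1 x = - (z - x) \<or> clip a2 z - clip a2 x = clip a3 z - clip a3 x"
  proof (cases "x = z")
    case False
    then show ?thesis
      using xz \<open>Q < y\<close> assms(3) a2_less_a1 a3_less_a2 unfolding tight1_def clip_def by (smt (z3))
  qed simp
qed

lemma safe1_of_not_tight2:
  assumes "0 \<le> Q" "Q \<le> y" "\<not> tight2 Q y"
  shows "safe1 Q"
  unfolding safe1_def tight1_def
proof (intro allI impI)
  fix x z assume xz: "0 \<le> x" "x \<le> z" "z \<le> Q"
  have "Q < y" using assms unfolding tight2_def by (cases "Q = y") auto
  show "clip a1 z - clip a1 x = clip a2 z - clip a2 x \<or> clip a3 z - clip a3 x = z - x"
  proof (cases "x = z")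
    case False
    then show ?thesis
      using xz \<open>Q < y\<close> assms(3) a2_less_a1 a3_less_a2 unfolding tight2_def clip_def by (smt (z3))
  qed simp
qed

lemma safe2_of_offset_ne:
  assumes "0 \<le> Q" "- offset 1 - tail 1 Q 0 \<noteq> - offset 0 - tail 0 Q 0"
  shows "safe2 Q"
  unfolding safe2_def tight2_def
proof (intro allI impI)
  fix x z assume xz: "0 \<le> x" "x \<le> z" "z \<le> Q"
  show "clip a1 z - clip a1 x = - (z - x) \<or> clip a2 z - clip a2 x = clip a3 z - clip a3 x"
  proof (cases "x = z")
    case False
    then show ?thesis
      using xz assms(2) a2_less_a1 a3_less_a2 unfolding tail_sum_zero offset_def clip_def by (smt (z3))
  qed simp
qed

definition signs :: "nat set \<Rightarrow> (nat \<Rightarrow> int) set" where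
  "signs D = {s. \<forall>i\<in>D. s i = 1 \<or> s i = -1}"

definition spread :: "nat set \<Rightarrow> (nat \<Rightarrow> real) \<Rightarrow> real" where
  "spread D x = (\<Sum>i\<in>D. \<Sum>j\<in>D. \<bar>x i - x j\<bar>) / 2"

definition sign_value :: "nat \<Rightarrow> nat set \<Rightarrow> (nat \<Rightarrow> real) \<Rightarrow> (nat \<Rightarrow> int) \<Rightarrow> real" where
  "sign_value k D P s = spread D (\<lambda>i. of_int (s i) * P i)
     + (\<Sum>i\<in>D. gain k (of_int (s i) * P i)) - offset k"

definition balanced_sum :: "nat \<Rightarrow> int" where
  "balanced_sum n = (if even n then 0 else -1)"

lemma parity_rep_sum_signs:
  "finite D \<Longrightarrow> s \<in> signs D \<Longrightarrow> parity_rep (sum s D) = balanced_sum (card D)"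
proof (induction D rule: finite_induct)
  case empty
  then show ?case by (simp add: parity_rep_def balanced_sum_def)
next
  case (insert i D)
  have "s \<in> signs D" "s i = 1 \<or> s i = -1" using insert.prems unfolding signs_def by auto
  then show ?case using insert.IH insert.hyps unfolding parity_rep_def balanced_sum_def
    by (auto split: if_splits)
qed

lemma sign_value_cong:
  "\<forall>i\<in>D. of_int (s i) * P i = of_int (t i) * P i \<Longrightarrow> sign_value k D P s = sign_value k D P t"
  unfolding sign_value_def spread_def by (metis (no_types, lifting) sum.cong)

lemma spread_insert:
  assumes "finite D" "i \<notin> D"
  shows "spread (insert i D) x = spread D x + (\<Sum>j\<in>D. \<bar>x i - x j\<bar>)"
proof -
  have "(\<Sum>k\<in>insert i D. \<Sum>j\<in>insert i D. \<bar>x k - x j\<bar>)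
      = (\<Sum>j\<in>D. \<bar>x i - x j\<bar>) + (\<Sum>k\<in>D. \<bar>x k - x i\<bar> + (\<Sum>j\<in>D. \<bar>x k - x j\<bar>))"
    using assms by simp
  also have "\<dots> = 2 * (\<Sum>j\<in>D. \<bar>x i - x j\<bar>) + (\<Sum>k\<in>D. \<Sum>j\<in>D. \<bar>x k - x j\<bar>)"
    by (simp add: sum.distrib abs_minus_commute)
  finally show ?thesis unfolding spread_def by simp
qed

definition growth :: "nat set \<Rightarrow> (nat \<Rightarrow> real) \<Rightarrow> nat \<Rightarrow> real" where
  "growth D P i = (\<Sum>j\<in>D. P j) + P i / 2 + gain_even (P i)"

text \<open>Adding an index i of least magnitude changes the value by an amount that depends on the
  signs only through s i and sum s D, because |s i P i - s j P j| = P j - s i s j P i.\<close>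
lemma sign_value_insert:
  assumes fin: "finite D" and i: "i \<notin> D" "0 \<le> P i" and least: "\<forall>j\<in>D. P i \<le> P j"
    and s: "s \<in> signs (insert i D)"
  shows "sign_value k (insert i D) P s = sign_value k D P s + growth D P i
           + tail k (P i) (sum s D + s i) - tail k (P i) (sum s D)"
proof -
  have si: "s i = 1 \<or> s i = -1" and sj: "\<forall>j\<in>D. s j = 1 \<or> s j = -1"
    using s unfolding signs_def by auto
  have "(\<Sum>j\<in>D. \<bar>of_int (s i) * P i - of_int (s j) * P j\<bar>)
      = (\<Sum>j\<in>D. P j - of_int (s i) * of_int (s j) * P i)"
  proof (intro sum.cong refl)
    fix j assume "j \<in> D"
    then have "P i \<le> P j" "s j = 1 \<or> s j = -1" using least sj by auto
    then show "\<bar>of_int (s i) * P i - of_int (s j) * P j\<bar> = P j - of_int (s i) * of_int (s j) * P i"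
      using si i(2) by (auto simp: abs_if)
  qed
  also have "\<dots> = (\<Sum>j\<in>D. P j) - of_int (s i) * P i * of_int (sum s D)"
    by (simp add: sum_subtractf sum_distrib_left sum_distrib_right algebra_simps)
  finally have spr: "(\<Sum>j\<in>D. \<bar>of_int (s i) * P i - of_int (s j) * P j\<bar>)
     = (\<Sum>j\<in>D. P j) - of_int (s i) * P i * of_int (sum s D)" .
  have gi: "gain k (of_int (s i) * P i) = gain_even (P i) + of_int (s i) * gain_odd k (P i)"
    using si gain_split[of k] gain_even_neg gain_odd_neg by auto
  have "(of_int (s i) :: real)^2 = 1" using si by auto
  then have tl: "tail k (P i) (sum s D + s i) - tail k (P i) (sum s D)
     = of_int (s i) * gain_odd k (P i) - P i / 2 - of_int (s i) * P i * of_int (sum s D)"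
    unfolding tail_def by (simp add: power2_eq_square field_simps)
  have "sign_value k (insert i D) P s = spread D (\<lambda>i. of_int (s i) * P i)
       + (\<Sum>j\<in>D. \<bar>of_int (s i) * P i - of_int (s j) * P j\<bar>)
       + (gain k (of_int (s i) * P i) + (\<Sum>j\<in>D. gain k (of_int (s j) * P j))) - offset k"
    unfolding sign_value_def spread_insert[OF fin i(1)] using fin i(1) by simp
  then show ?thesis using spr gi tl unfolding sign_value_def growth_def by linarith
qed

lemma sign_value_extend:
  assumes fin: "finite D" and i: "i \<notin> D" "0 \<le> P i" and least: "\<forall>j\<in>D. P i \<le> P j"
    and s: "s \<in> signs D" and t: "t = 1 \<or> t = -1"
  shows "s(i := t) \<in> signs (insert i D)"
    and "sum (s(i := t)) (insert i D) = sum s D + t"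
    and "sign_value k (insert i D) P (s(i := t)) = sign_value k D P s + growth D P i
           + tail k (P i) (sum s D + t) - tail k (P i) (sum s D)"
proof -
  show st: "s(i := t) \<in> signs (insert i D)" using s t unfolding signs_def by auto
  have eq: "\<forall>j\<in>D. (s(i := t)) j = s j" using i by auto
  then have sum_eq: "sum (s(i := t)) D = sum s D" by (simp cong: sum.cong)
  then show "sum (s(i := t)) (insert i D) = sum s D + t" using fin i by simp
  show "sign_value k (insert i D) P (s(i := t)) = sign_value k D P s + growth D P i
           + tail k (P i) (sum s D + t) - tail k (P i) (sum s D)"
    using sign_value_insert[OF fin i least st, of k] sign_value_cong[of D "s(i := t)" P s k] eq sum_eq
    by simp
qed

definition lifted :: "nat set \<Rightarrow> (nat \<Rightarrow> real) \<Rightarrow> nat \<Rightarrow> real \<Rightarrow> real" where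
  "lifted D P i v = v + growth D P i + tail 0 (P i) (balanced_sum (Suc (card D)))
     - tail 0 (P i) (balanced_sum (card D))"

definition dominates :: "nat set \<Rightarrow> (nat \<Rightarrow> real) \<Rightarrow> real \<Rightarrow> real \<Rightarrow> bool" where
  "dominates D P v Q \<longleftrightarrow> (\<forall>s\<in>signs D. \<forall>k\<le>2.
     sign_value k D P s - tail k Q (sum s D) \<le> v - tail 0 Q (balanced_sum (card D)))"

definition attains1 :: "nat set \<Rightarrow> (nat \<Rightarrow> real) \<Rightarrow> real \<Rightarrow> real \<Rightarrow> bool" where
  "attains1 D P v Q \<longleftrightarrow> (\<exists>s\<in>signs D.
     (if even (card D) then sum s D = 0 \<or> sum s D = -2 else sum s D = -1) \<and>
     sign_value 1 D P s - tail 1 Q (sum s D) = v - tail 0 Q (balanced_sum (card D)))"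

definition attains2 :: "nat set \<Rightarrow> (nat \<Rightarrow> real) \<Rightarrow> real \<Rightarrow> real \<Rightarrow> bool" where
  "attains2 D P v Q \<longleftrightarrow> (\<exists>s\<in>signs D.
     (if even (card D) then sum s D = 0 else sum s D = 1 \<or> sum s D = -1) \<and>
     sign_value 2 D P s - tail 2 Q (sum s D) = v - tail 0 Q (balanced_sum (card D)))"

lemma dominates_insert:
  assumes fin: "finite D" and i: "i \<notin> D" "0 \<le> P i" and least: "\<forall>j\<in>D. P i \<le> P j"
    and Q: "0 \<le> Q" "Q \<le> P i" and dom: "dominates D P v (P i)"
  shows "dominates (insert i D) P (lifted D P i v) Q"
  unfolding dominates_def
proof (intro ballI allI impI)
  fix s k assume s: "s \<in> signs (insert i D)" and k: "k \<le> (2::nat)"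
  have "s \<in> signs D" using s unfolding signs_def by auto
  then have ih: "sign_value k D P s - tail k (P i) (sum s D) \<le> v - tail 0 (P i) (balanced_sum (card D))"
    using dom k unfolding dominates_def by blast
  have sum_ins: "sum s (insert i D) = sum s D + s i" using fin i by simp
  have "parity_rep (sum s (insert i D)) = balanced_sum (Suc (card D))"
    using parity_rep_sum_signs[OF _ s] fin i by simp
  then have tl: "tail k (P i) (sum s D + s i) - tail k Q (sum s D + s i)
      \<le> tail 0 (P i) (balanced_sum (Suc (card D))) - tail 0 Q (balanced_sum (Suc (card D)))"
    using tail_diff_le[OF Q k, of "sum s D + s i"] sum_ins by simp
  have card: "card (insert i D) = Suc (card D)" using fin i by simp
  show "sign_value k (insert i D) P s - tail k Q (sum s (insert i D))
      \<le> lifted D P i v - tail 0 Q (balanced_sum (card (insert i D)))"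
    unfolding sum_ins card lifted_def using sign_value_insert[OF fin i least s, of k] ih tl by linarith
qed

lemma attains1_insert:
  assumes fin: "finite D" and i: "i \<notin> D" "0 \<le> P i" and least: "\<forall>j\<in>D. P i \<le> P j"
    and Q: "0 \<le> Q" "Q \<le> P i" and att: "attains1 D P v (P i)"
    and tight: "odd (Suc (card D)) \<or> tight1 Q (P i)"
  shows "attains1 (insert i D) P (lifted D P i v) Q"
proof -
  obtain s where s: "s \<in> signs D"
    and range: "if even (card D) then sum s D = 0 \<or> sum s D = -2 else sum s D = -1"
    and eq: "sign_value 1 D P s - tail 1 (P i) (sum s D) = v - tail 0 (P i) (balanced_sum (card D))"
    using att unfolding attains1_def by blast
  have card: "card (insert i D) = Suc (card D)" using fin i by simp
  obtain t where t: "t = 1 \<or> t = -1"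
    and tl: "tail 1 (P i) (sum s D + t) - tail 1 Q (sum s D + t)
      = tail 0 (P i) (balanced_sum (Suc (card D))) - tail 0 Q (balanced_sum (Suc (card D)))"
    and range': "if even (Suc (card D)) then sum s D + t = 0 \<or> sum s D + t = -2 else sum s D + t = -1"
  proof (cases "even (card D)")
    case True
    then show ?thesis
      using that[of "-1 - sum s D"] range tail1_diff_eq_tail0[OF Q(1) i(2)]
      by (auto simp: balanced_sum_def)
  next
    case False
    obtain u where "u = 0 \<or> u = -2"
      and "tail 1 (P i) u - tail 1 Q u = tail 0 (P i) 0 - tail 0 Q 0"
      using tight1_tail_eq[OF Q(1) i(2)] tight False by auto
    then show ?thesis using that[of "u + 1"] range False by (auto simp: balanced_sum_def)
  qed
  note ext = sign_value_extend[OF fin i least s t]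
  show ?thesis unfolding attains1_def
    using ext(1) ext(2) ext(3)[of 1] eq tl range' card unfolding lifted_def
    by (intro bexI[of _ "s(i := t)"]) auto
qed

lemma attains2_insert:
  assumes fin: "finite D" and i: "i \<notin> D" "0 \<le> P i" and least: "\<forall>j\<in>D. P i \<le> P j"
    and Q: "0 \<le> Q" "Q \<le> P i" and att: "attains2 D P v (P i)"
    and tight: "even (Suc (card D)) \<or> tight2 Q (P i)"
  shows "attains2 (insert i D) P (lifted D P i v) Q"
proof -
  obtain s where s: "s \<in> signs D"
    and range: "if even (card D) then sum s D = 0 else sum s D = 1 \<or> sum s D = -1"
    and eq: "sign_value 2 D P s - tail 2 (P i) (sum s D) = v - tail 0 (P i) (balanced_sum (card D))"
    using att unfolding attains2_def by blast
  have card: "card (insert i D) = Suc (card D)" using fin i by simp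
  obtain t where t: "t = 1 \<or> t = -1"
    and tl: "tail 2 (P i) (sum s D + t) - tail 2 Q (sum s D + t)
      = tail 0 (P i) (balanced_sum (Suc (card D))) - tail 0 Q (balanced_sum (Suc (card D)))"
    and range': "if even (Suc (card D)) then sum s D + t = 0 else sum s D + t = 1 \<or> sum s D + t = -1"
  proof (cases "even (card D)")
    case False
    then show ?thesis
      using that[of "- sum s D"] range tail2_diff_eq_tail0[of "P i" Q]
      by (auto simp: balanced_sum_def)
  next
    case True
    obtain u where "u = 1 \<or> u = -1"
      and "tail 2 (P i) u - tail 2 Q u = tail 0 (P i) (-1) - tail 0 Q (-1)"
      using tight2_tail_eq[OF Q(1) i(2)] tight True by auto
    then show ?thesis using that[of u] range True by (auto simp: balanced_sum_def)
  qed
  note ext = sign_value_extend[OF fin i least s t]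
  show ?thesis unfolding attains2_def
    using ext(1) ext(2) ext(3)[of 2] eq tl range' card unfolding lifted_def
    by (intro bexI[of _ "s(i := t)"]) auto
qed

text \<open>The induction hypothesis: after correcting by the tails at any level Q below the magnitudes
  in D, v = sign_value 0 D P s0 dominates all sign values and is attained for k = 1 and k = 2,
  except that one of the two may fail when the other kind is safe up to Q. At Q = 0 the tails
  vanish.\<close>
definition extremal :: "nat set \<Rightarrow> (nat \<Rightarrow> real) \<Rightarrow> bool" where
  "extremal D P \<longleftrightarrow> (\<exists>s0\<in>signs D. sum s0 D = balanced_sum (card D) \<and>
     (\<forall>Q. 0 \<le> Q \<and> (\<forall>i\<in>D. Q \<le> P i) \<longrightarrow>
        (let v = sign_value 0 D P s0 in dominates D P v Q \<and>
          (attains1 D P v Q \<and> attains2 D P v Q \<or> attains1 D P v Q \<and> safe1 Q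
           \<or> attains2 D P v Q \<and> safe2 Q))))"

lemma extremal_empty: "extremal {} P"
proof -
  have val: "sign_value k {} P s = - offset k" for k s by (simp add: sign_value_def spread_def)
  have bal: "balanced_sum 0 = 0" by (simp add: balanced_sum_def)
  have "dominates {} P (- offset 0) Q \<and>
      (attains1 {} P (- offset 0) Q \<and> attains2 {} P (- offset 0) Q \<or> attains2 {} P (- offset 0) Q \<and> safe2 Q)"
    if Q: "0 \<le> Q" for Q
  proof -
    have "attains2 {} P (- offset 0) Q" unfolding attains2_def signs_def
      by (simp add: val bal tail_sum_zero offset_def)
    moreover have "attains1 {} P (- offset 0) Q" if "- offset 1 - tail 1 Q 0 = - offset 0 - tail 0 Q 0"
      using that unfolding attains1_def signs_def by (simp add: val bal)
    moreover have "dominates {} P (- offset 0) Q"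
      using offset_tail_le[OF Q] unfolding dominates_def by (simp add: val bal)
    ultimately show ?thesis using safe2_of_offset_ne[OF Q] by blast
  qed
  then show ?thesis unfolding extremal_def signs_def Let_def by (auto simp: val bal)
qed

lemma extremal_insert_choice:
  assumes fin: "finite D" and i: "i \<notin> D" "0 \<le> P i" and least: "\<forall>j\<in>D. P i \<le> P j"
    and Q: "0 \<le> Q" "Q \<le> P i"
    and choice: "attains1 D P v (P i) \<and> attains2 D P v (P i) \<or> attains1 D P v (P i) \<and> safe1 (P i)
       \<or> attains2 D P v (P i) \<and> safe2 (P i)"
  shows "attains1 (insert i D) P (lifted D P i v) Q \<and> attains2 (insert i D) P (lifted D P i v) Q
    \<or> attains1 (insert i D) P (lifted D P i v) Q \<and> safe1 Q
    \<or> attains2 (insert i D) P (lifted D P i v) Q \<and> safe2 Q"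
proof -
  note A1 = attains1_insert[OF fin i least Q] and A2 = attains2_insert[OF fin i least Q]
  have S1: "tight1 Q (P i) \<and> safe1 Q" if "safe1 (P i)"
    using that Q unfolding safe1_def by auto
  have S2: "tight2 Q (P i) \<and> safe2 Q" if "safe2 (P i)"
    using that Q unfolding safe2_def by auto
  from choice show ?thesis
  proof (elim disjE conjE)
    assume a1: "attains1 D P v (P i)" and a2: "attains2 D P v (P i)"
    consider "odd (Suc (card D)) \<or> tight1 Q (P i)" "even (Suc (card D)) \<or> tight2 Q (P i)"
      | "\<not> tight1 Q (P i)" "even (Suc (card D))" | "\<not> tight2 Q (P i)" "odd (Suc (card D))"
      by blast
    then show ?thesis
    proof cases
      case 1
      then show ?thesis using A1[OF a1] A2[OF a2] by blast
    next
      case 2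
      then show ?thesis using A2[OF a2] safe2_of_not_tight1[OF Q] by blast
    next
      case 3
      then show ?thesis using A1[OF a1] safe1_of_not_tight2[OF Q] by blast
    qed
  next
    assume "attains1 D P v (P i)" "safe1 (P i)"
    then show ?thesis using A1 S1 by blast
  next
    assume "attains2 D P v (P i)" "safe2 (P i)"
    then show ?thesis using A2 S2 by blast
  qed
qed

lemma extremal_insert:
  assumes fin: "finite D" and i: "i \<notin> D" "0 \<le> P i" and least: "\<forall>j\<in>D. P i \<le> P j"
    and ext: "extremal D P"
  shows "extremal (insert i D) P"
proof -
  obtain s0 where s0: "s0 \<in> signs D" and sum_s0: "sum s0 D = balanced_sum (card D)"
    and H: "\<And>Q. 0 \<le> Q \<Longrightarrow> \<forall>j\<in>D. Q \<le> P j \<Longrightarrow> dominates D P (sign_value 0 D P s0) Q \<and>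
      (attains1 D P (sign_value 0 D P s0) Q \<and> attains2 D P (sign_value 0 D P s0) Q
       \<or> attains1 D P (sign_value 0 D P s0) Q \<and> safe1 Q \<or> attains2 D P (sign_value 0 D P s0) Q \<and> safe2 Q)"
    using ext unfolding extremal_def Let_def by blast
  define t where "t = balanced_sum (Suc (card D)) - balanced_sum (card D)"
  have t: "t = 1 \<or> t = -1" unfolding t_def balanced_sum_def by auto
  note ext0 = sign_value_extend[OF fin i least s0 t]
  have card: "card (insert i D) = Suc (card D)" using fin i by simp
  have val: "sign_value 0 (insert i D) P (s0(i := t)) = lifted D P i (sign_value 0 D P s0)"
    using ext0(3)[of 0] sum_s0 unfolding lifted_def t_def by simp
  have HP: "dominates D P (sign_value 0 D P s0) (P i) \<and>
      (attains1 D P (sign_value 0 D P s0) (P i) \<and> attains2 D P (sign_value 0 D P s0) (P i)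
       \<or> attains1 D P (sign_value 0 D P s0) (P i) \<and> safe1 (P i)
       \<or> attains2 D P (sign_value 0 D P s0) (P i) \<and> safe2 (P i))"
    using H[OF i(2) least] .
  show ?thesis unfolding extremal_def Let_def
  proof (intro bexI[of _ "s0(i := t)"] conjI allI impI, unfold val)
    show "sum (s0(i := t)) (insert i D) = balanced_sum (card (insert i D))"
      using ext0(2) sum_s0 card unfolding t_def by simp
    fix Q assume "0 \<le> Q \<and> (\<forall>j\<in>insert i D. Q \<le> P j)"
    then have Q: "0 \<le> Q" "Q \<le> P i" by auto
    show "dominates (insert i D) P (lifted D P i (sign_value 0 D P s0)) Q"
      using dominates_insert[OF fin i least Q] HP by blast
    show "attains1 (insert i D) P (lifted D P i (sign_value 0 D P s0)) Q \<and>
        attains2 (insert i D) P (lifted D P i (sign_value 0 D P s0)) Q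
      \<or> attains1 (insert i D) P (lifted D P i (sign_value 0 D P s0)) Q \<and> safe1 Q
      \<or> attains2 (insert i D) P (lifted D P i (sign_value 0 D P s0)) Q \<and> safe2 Q"
      using extremal_insert_choice[OF fin i least Q] HP by blast
  qed (rule ext0(1))
qed

lemma extremal_finite: "finite D \<Longrightarrow> \<forall>i\<in>D. 0 \<le> P i \<Longrightarrow> extremal D P"
proof (induction "card D" arbitrary: D)
  case 0
  then show ?case using extremal_empty by simp
next
  case (Suc n)
  then have "Min (P ` D) \<in> P ` D" by (intro Min_in) auto
  then obtain i where i: "i \<in> D" "P i = Min (P ` D)" by (metis imageE)
  have least: "\<forall>j\<in>D - {i}. P i \<le> P j" using i Suc.prems by auto
  have "extremal (D - {i}) P" using Suc.hyps Suc.prems i by auto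
  then have "extremal (insert i (D - {i})) P"
    using extremal_insert[OF _ _ _ least] Suc.prems i by auto
  then show ?case using i by (simp add: insert_absorb)
qed

lemma sign_value_max:
  assumes "finite D" "\<forall>i\<in>D. 0 \<le> P i"
  obtains s0 where "s0 \<in> signs D" "\<And>s k. s \<in> signs D \<Longrightarrow> k \<le> 2 \<Longrightarrow> sign_value k D P s \<le> sign_value 0 D P s0"
    and "\<exists>s\<in>signs D. sign_value 1 D P s = sign_value 0 D P s0 \<or> sign_value 2 D P s = sign_value 0 D P s0"
proof -
  obtain s0 where "s0 \<in> signs D" and "dominates D P (sign_value 0 D P s0) 0"
    and "attains1 D P (sign_value 0 D P s0) 0 \<or> attains2 D P (sign_value 0 D P s0) 0"
    using extremal_finite[OF assms] assms(2) unfolding extremal_def Let_def by fastforce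
  then show ?thesis
    using that unfolding dominates_def attains1_def attains2_def tail_vanishes by fastforce
qed

end

locale kp = kp_parameters +
  fixes N :: nat and p c c' :: "nat \<Rightarrow> real" and s :: int
begin

abbreviation T :: "int \<Rightarrow> int \<Rightarrow> int \<Rightarrow> real" where
  "T l m n \<equiv> tau N a1 a2 a3 p c c' s l m n"

definition intercept :: "int \<Rightarrow> int \<Rightarrow> int \<Rightarrow> bool \<Rightarrow> nat \<Rightarrow> real" where
  "intercept l m n b i = (if b then eta a1 a2 a3 (p i) (c i) l m n (s - 1)
     else eta' a1 a2 a3 (p i) (c' i) l m n (s - 1))"

definition slope :: "bool \<Rightarrow> nat \<Rightarrow> real" where
  "slope b i = (if b then p i else - p i)"

lemma tau_eq_UP:
  "T l m n = UP N (\<lambda>i j. max (intercept l m n True i + slope True i * real j)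
                           (intercept l m n False i + slope False i * real j))"
proof -
  have "phi a1 a2 a3 (p i) (c i) (c' i) l m n (s + int j - 1)
      = max (intercept l m n True i + slope True i * real j) (intercept l m n False i + slope False i * real j)"
    for i j
    unfolding phi_def eta_def eta'_def intercept_def slope_def by (simp add: algebra_simps)
  then show ?thesis unfolding tau_def by simp
qed

definition shift_gain :: "int \<Rightarrow> int \<Rightarrow> int \<Rightarrow> real \<Rightarrow> real" where
  "shift_gain e1 e2 e3 x = of_int e1 * max 0 (x - a1) + of_int e2 * max 0 (x - a2) + of_int e3 * max 0 (x - a3)"

definition pair_gain :: "int \<Rightarrow> int \<Rightarrow> int \<Rightarrow> real \<Rightarrow> real" where
  "pair_gain e1 e2 e3 x = shift_gain e1 e2 e3 x + shift_gain (1 - e1) (1 - e2) (1 - e3) (-x)"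

lemma pair_gain_eq_gain: "pair_gain 0 1 0 = gain 0" "pair_gain 1 0 0 = gain 1" "pair_gain 0 0 1 = gain 2"
  unfolding pair_gain_def shift_gain_def gain_def by (auto simp: fun_eq_iff)

definition pair_value :: "int \<Rightarrow> int \<Rightarrow> int \<Rightarrow> int \<Rightarrow> int \<Rightarrow> int \<Rightarrow> (nat \<Rightarrow> bool) \<Rightarrow> (nat \<Rightarrow> bool) \<Rightarrow> real"
  where "pair_value l m n e1 e2 e3 \<delta> \<delta>' =
    choice_value N (intercept (l + e1) (m + e2) (n + e3)) slope \<delta>
    + choice_value N (intercept (l + (1 - e1)) (m + (1 - e2)) (n + (1 - e3))) slope \<delta>'"

lemma pair_value_le_tau:
  "pair_value l m n 0 1 0 \<delta> \<delta>' \<le> T l (m + 1) n + T (l + 1) m (n + 1)"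
  "pair_value l m n 1 0 0 \<delta> \<delta>' \<le> T (l + 1) m n + T l (m + 1) (n + 1)"
  "pair_value l m n 0 0 1 \<delta> \<delta>' \<le> T l m (n + 1) + T (l + 1) (m + 1) n"
  unfolding pair_value_def tau_eq_UP by (simp_all add: add_mono choice_value_le_UP)

lemma pair_value_attains_tau:
  "\<exists>\<delta> \<delta>'. pair_value l m n 0 1 0 \<delta> \<delta>' = T l (m + 1) n + T (l + 1) m (n + 1)"
  "\<exists>\<delta> \<delta>'. pair_value l m n 1 0 0 \<delta> \<delta>' = T (l + 1) m n + T l (m + 1) (n + 1)"
  "\<exists>\<delta> \<delta>'. pair_value l m n 0 0 1 \<delta> \<delta>' = T l m (n + 1) + T (l + 1) (m + 1) n"
proof -
  have "\<exists>\<delta> \<delta>'. choice_value N (intercept l1 m1 n1) slope \<delta> + choice_value N (intercept l2 m2 n2) slope \<delta>'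
      = T l1 m1 n1 + T l2 m2 n2" for l1 m1 n1 l2 m2 n2
    unfolding tau_eq_UP by (metis UP_eq_choice_value)
  then show "\<exists>\<delta> \<delta>'. pair_value l m n 0 1 0 \<delta> \<delta>' = T l (m + 1) n + T (l + 1) m (n + 1)"
    "\<exists>\<delta> \<delta>'. pair_value l m n 1 0 0 \<delta> \<delta>' = T (l + 1) m n + T l (m + 1) (n + 1)"
    "\<exists>\<delta> \<delta>'. pair_value l m n 0 0 1 \<delta> \<delta>' = T l m (n + 1) + T (l + 1) (m + 1) n"
    unfolding pair_value_def by simp_all
qed

definition flips :: "(nat \<Rightarrow> bool) \<Rightarrow> (nat \<Rightarrow> bool) \<Rightarrow> nat set" where
  "flips \<delta> \<delta>' = {i\<in>{1..N}. \<delta> i \<noteq> \<delta>' i}"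

definition magnitude :: "nat \<Rightarrow> real" where
  "magnitude i = \<bar>p i\<bar>"

definition sign_of :: "(nat \<Rightarrow> bool) \<Rightarrow> nat \<Rightarrow> int" where
  "sign_of \<delta> i = (if 0 \<le> slope (\<delta> i) i then 1 else -1)"

lemma sign_of_magnitude: "of_int (sign_of \<delta> i) * magnitude i = slope (\<delta> i) i"
  unfolding sign_of_def magnitude_def slope_def by auto

definition common_row :: "int \<Rightarrow> int \<Rightarrow> int \<Rightarrow> nat set \<Rightarrow> (nat \<Rightarrow> bool) \<Rightarrow> nat \<Rightarrow> real" where
  "common_row l m n D \<delta> i = (if i \<in> D then intercept l m n True i + intercept l m n False i
     else 2 * intercept l m n (\<delta> i) i + 2 * slope (\<delta> i) i + shift_gain 1 1 1 (slope (\<delta> i) i))"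

definition common_pair :: "nat set \<Rightarrow> (nat \<Rightarrow> bool) \<Rightarrow> nat \<Rightarrow> nat \<Rightarrow> real" where
  "common_pair D \<delta> i j = (if i \<in> D then
       (if j \<in> D then 0 else max (magnitude i) (slope (\<delta> j) j) + max (- magnitude i) (slope (\<delta> j) j))
     else if j \<in> D then max (slope (\<delta> i) i) (magnitude j) + max (slope (\<delta> i) i) (- magnitude j)
     else 2 * max (slope (\<delta> i) i) (slope (\<delta> j) j))"

text \<open>The part of a pair value that depends on the branches \<delta> only outside the flip set D.\<close>
definition common_part :: "int \<Rightarrow> int \<Rightarrow> int \<Rightarrow> nat set \<Rightarrow> (nat \<Rightarrow> bool) \<Rightarrow> real" where
  "common_part l m n D \<delta> = (\<Sum>i\<in>{1..N}. common_row l m n D \<delta> i)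
     + (\<Sum>i\<in>{1..N}. \<Sum>j\<in>{1..N}. if j < i then common_pair D \<delta> i j else 0)"

lemma intercept_shift:
  "intercept (l + e1) (m + e2) (n + e3) b i = intercept l m n b i + shift_gain e1 e2 e3 (slope b i)"
  unfolding intercept_def slope_def eta_def eta'_def shift_gain_def by (simp add: algebra_simps)

lemma choice_value_shift:
  "choice_value N (intercept (l + e1) (m + e2) (n + e3)) slope \<delta>
    = (\<Sum>i\<in>{1..N}. intercept l m n (\<delta> i) i + slope (\<delta> i) i + shift_gain e1 e2 e3 (slope (\<delta> i) i))
      + pairwise_max_sum {1..N} (\<lambda>i. slope (\<delta> i) i)"
  unfolding choice_value_def intercept_shift by (simp add: algebra_simps)

lemma pair_row_decomp:
  assumes "i \<in> {1..N}"
  shows "(intercept l m n (\<delta> i) i + slope (\<delta> i) i + shift_gain e1 e2 e3 (slope (\<delta> i) i))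
      + (intercept l m n (\<delta>' i) i + slope (\<delta>' i) i + shift_gain (1 - e1) (1 - e2) (1 - e3) (slope (\<delta>' i) i))
    = common_row l m n (flips \<delta> \<delta>') \<delta> i
      + (if i \<in> flips \<delta> \<delta>' then pair_gain e1 e2 e3 (slope (\<delta> i) i) else 0)"
proof (cases "i \<in> flips \<delta> \<delta>'")
  case True
  then have "\<delta>' i = (\<not> \<delta> i)" unfolding flips_def by auto
  then show ?thesis using True unfolding common_row_def pair_gain_def slope_def by (cases "\<delta> i") auto
next
  case False
  then have "\<delta>' i = \<delta> i" using assms unfolding flips_def by auto
  then show ?thesis using False unfolding common_row_def shift_gain_def by (simp add: algebra_simps)
qed

lemma pair_cross_decomp:
  assumes "i \<in> {1..N}" "j \<in> {1..N}"
  shows "max (slope (\<delta> i) i) (slope (\<delta> j) j) + max (slope (\<delta>' i) i) (slope (\<delta>' j) j)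
    = common_pair (flips \<delta> \<delta>') \<delta> i j
      + (if i \<in> flips \<delta> \<delta>' \<and> j \<in> flips \<delta> \<delta>' then \<bar>slope (\<delta> i) i - slope (\<delta> j) j\<bar> else 0)"
proof -
  have flip: "slope (\<delta>' k) k = - slope (\<delta> k) k" if "k \<in> flips \<delta> \<delta>'" for k
    using that unfolding flips_def slope_def by auto
  have keep: "slope (\<delta>' k) k = slope (\<delta> k) k" if "k \<in> {1..N}" "k \<notin> flips \<delta> \<delta>'" for k
    using that unfolding flips_def by auto
  have mag: "magnitude k = \<bar>slope (\<delta> k) k\<bar>" for k
    unfolding magnitude_def slope_def by auto
  show ?thesis
    using flip[of i] flip[of j] keep[OF assms(1)] keep[OF assms(2)] mag[of i] mag[of j]
    unfolding common_pair_def by (auto simp: max_def)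
qed

lemma pair_value_decomp:
  "pair_value l m n e1 e2 e3 \<delta> \<delta>' = common_part l m n (flips \<delta> \<delta>') \<delta>
     + spread (flips \<delta> \<delta>') (\<lambda>i. slope (\<delta> i) i) + (\<Sum>i\<in>flips \<delta> \<delta>'. pair_gain e1 e2 e3 (slope (\<delta> i) i))"
proof -
  define D where "D = flips \<delta> \<delta>'"
  define q where "q i = slope (\<delta> i) i" for i
  have D: "D \<subseteq> {1..N}" unfolding D_def flips_def by auto
  have "(\<Sum>i\<in>{1..N}. if i \<in> D then pair_gain e1 e2 e3 (q i) else 0) = (\<Sum>i\<in>D. pair_gain e1 e2 e3 (q i))"
    using sum.inter_restrict[of "{1..N}" "\<lambda>i. pair_gain e1 e2 e3 (q i)" D] D by (simp add: Int_absorb1)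
  then have rows: "(\<Sum>i\<in>{1..N}. (intercept l m n (\<delta> i) i + slope (\<delta> i) i + shift_gain e1 e2 e3 (slope (\<delta> i) i))
      + (intercept l m n (\<delta>' i) i + slope (\<delta>' i) i + shift_gain (1 - e1) (1 - e2) (1 - e3) (slope (\<delta>' i) i)))
    = (\<Sum>i\<in>{1..N}. common_row l m n D \<delta> i) + (\<Sum>i\<in>D. pair_gain e1 e2 e3 (q i))"
    using pair_row_decomp unfolding D_def q_def by (simp add: sum.distrib)
  have "pairwise_max_sum {1..N} (\<lambda>i. slope (\<delta> i) i) + pairwise_max_sum {1..N} (\<lambda>i. slope (\<delta>' i) i)
    = (\<Sum>i\<in>{1..N}. \<Sum>j\<in>{1..N}. (if j < i then common_pair D \<delta> i j else 0)
        + (if j < i then (if i \<in> D \<and> j \<in> D then \<bar>q i - q j\<bar> else 0) else 0))"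
    unfolding pairwise_max_sum_def sum.distrib[symmetric] using pair_cross_decomp
    unfolding D_def q_def by (intro sum.cong refl) auto
  also have "\<dots> = (\<Sum>i\<in>{1..N}. \<Sum>j\<in>{1..N}. if j < i then common_pair D \<delta> i j else 0) + spread D q"
    using sum_lower_pairs_restrict[OF D, of q] sum_lower_pairs_abs[of q D]
    unfolding spread_def by (simp add: sum.distrib)
  finally show ?thesis
    using rows unfolding pair_value_def choice_value_shift common_part_def D_def[symmetric] q_def[symmetric]
    by (simp add: sum.distrib)
qed

lemma pair_value_eq_sign_value:
  "pair_value l m n 0 1 0 \<delta> \<delta>' - a2 = common_part l m n (flips \<delta> \<delta>') \<delta> + sign_value 0 (flips \<delta> \<delta>') magnitude (sign_of \<delta>)"
  "pair_value l m n 1 0 0 \<delta> \<delta>' - a1 = common_part l m n (flips \<delta> \<delta>') \<delta> + sign_value 1 (flips \<delta> \<delta>') magnitude (sign_of \<delta>)"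
  "pair_value l m n 0 0 1 \<delta> \<delta>' - a2 = common_part l m n (flips \<delta> \<delta>') \<delta> + sign_value 2 (flips \<delta> \<delta>') magnitude (sign_of \<delta>)"
  unfolding pair_value_decomp sign_value_def sign_of_magnitude pair_gain_eq_gain offset_def by simp_all

lemma flips_realize_signs:
  assumes u: "u \<in> signs (flips \<epsilon> \<epsilon>')"
  obtains \<delta> \<delta>' where "flips \<delta> \<delta>' = flips \<epsilon> \<epsilon>'" "common_part l m n (flips \<delta> \<delta>') \<delta> = common_part l m n (flips \<epsilon> \<epsilon>') \<epsilon>"
    "\<forall>k. sign_value k (flips \<delta> \<delta>') magnitude (sign_of \<delta>) = sign_value k (flips \<epsilon> \<epsilon>') magnitude u"
proof -
  define D where "D = flips \<epsilon> \<epsilon>'"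
  define \<delta> where "\<delta> i = (if i \<in> D \<and> u i \<noteq> sign_of \<epsilon> i then \<not> \<epsilon> i else \<epsilon> i)" for i
  define \<delta>' where "\<delta>' i = (if i \<in> D then \<not> \<delta> i else \<epsilon>' i)" for i
  have flips: "flips \<delta> \<delta>' = D"
    unfolding flips_def \<delta>'_def \<delta>_def D_def by auto
  have "\<delta> i = \<epsilon> i" if "i \<notin> D" for i using that unfolding \<delta>_def by simp
  then have "common_part l m n D \<delta> = common_part l m n D \<epsilon>"
    unfolding common_part_def common_row_def common_pair_def
    by (intro arg_cong2[where f = "(+)"] sum.cong refl) auto
  moreover have "of_int (sign_of \<delta> i) * magnitude i = of_int (u i) * magnitude i" if "i \<in> D" for i
  proof -
    have "u i = 1 \<or> u i = -1" using u that unfolding signs_def D_def by auto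
    moreover have "sign_of \<epsilon> i = 1 \<or> sign_of \<epsilon> i = -1" unfolding sign_of_def by auto
    moreover have "slope (\<not> b) i = - slope b i" for b unfolding slope_def by simp
    ultimately show ?thesis using that sign_of_magnitude[of \<epsilon> i] sign_of_magnitude[of \<delta> i]
      unfolding \<delta>_def by auto
  qed
  ultimately show ?thesis
    using that[of \<delta> \<delta>'] flips sign_value_cong unfolding D_def by auto
qed

lemma sign_of_in_signs: "sign_of \<delta> \<in> signs D"
  unfolding signs_def sign_of_def by auto

lemma flip_sign_value_max:
  "\<exists>u\<in>signs (flips \<epsilon> \<epsilon>').
    (\<forall>t\<in>signs (flips \<epsilon> \<epsilon>'). \<forall>k\<le>2.
       sign_value k (flips \<epsilon> \<epsilon>') magnitude t \<le> sign_value 0 (flips \<epsilon> \<epsilon>') magnitude u)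
    \<and> (\<exists>t\<in>signs (flips \<epsilon> \<epsilon>').
       sign_value 1 (flips \<epsilon> \<epsilon>') magnitude t = sign_value 0 (flips \<epsilon> \<epsilon>') magnitude u
       \<or> sign_value 2 (flips \<epsilon> \<epsilon>') magnitude t = sign_value 0 (flips \<epsilon> \<epsilon>') magnitude u)"
proof -
  have "finite (flips \<epsilon> \<epsilon>')" "\<forall>i\<in>flips \<epsilon> \<epsilon>'. 0 \<le> magnitude i"
    by (auto simp: flips_def magnitude_def)
  then show ?thesis by (rule sign_value_max) blast
qed

lemma lhs_le_rhs:
  "T l (m + 1) n + T (l + 1) m (n + 1) - a2
    \<le> max (T (l + 1) m n + T l (m + 1) (n + 1) - a1) (T l m (n + 1) + T (l + 1) (m + 1) n - a2)"
proof -
  obtain \<epsilon> \<epsilon>' where lhs: "pair_value l m n 0 1 0 \<epsilon> \<epsilon>' = T l (m + 1) n + T (l + 1) m (n + 1)"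
    using pair_value_attains_tau(1) by blast
  obtain u t where le: "\<forall>t\<in>signs (flips \<epsilon> \<epsilon>'). \<forall>k\<le>2.
       sign_value k (flips \<epsilon> \<epsilon>') magnitude t \<le> sign_value 0 (flips \<epsilon> \<epsilon>') magnitude u"
    and t: "t \<in> signs (flips \<epsilon> \<epsilon>')"
    and top: "sign_value 1 (flips \<epsilon> \<epsilon>') magnitude t = sign_value 0 (flips \<epsilon> \<epsilon>') magnitude u
       \<or> sign_value 2 (flips \<epsilon> \<epsilon>') magnitude t = sign_value 0 (flips \<epsilon> \<epsilon>') magnitude u"
    using flip_sign_value_max[of \<epsilon> \<epsilon>'] by blast
  obtain \<delta> \<delta>' where flips: "flips \<delta> \<delta>' = flips \<epsilon> \<epsilon>'"
    and common: "common_part l m n (flips \<delta> \<delta>') \<delta> = common_part l m n (flips \<epsilon> \<epsilon>') \<epsilon>"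
    and val: "\<forall>k. sign_value k (flips \<delta> \<delta>') magnitude (sign_of \<delta>) = sign_value k (flips \<epsilon> \<epsilon>') magnitude t"
    by (rule flips_realize_signs[OF t, where l = l and m = m and n = n])
  have "sign_value 0 (flips \<epsilon> \<epsilon>') magnitude (sign_of \<epsilon>) \<le> sign_value 0 (flips \<epsilon> \<epsilon>') magnitude u"
    using le sign_of_in_signs by blast
  then have "T l (m + 1) n + T (l + 1) m (n + 1) - a2
      \<le> common_part l m n (flips \<epsilon> \<epsilon>') \<epsilon> + sign_value 0 (flips \<epsilon> \<epsilon>') magnitude u"
    using pair_value_eq_sign_value(1)[of l m n \<epsilon> \<epsilon>'] lhs by simp
  moreover from top have "common_part l m n (flips \<epsilon> \<epsilon>') \<epsilon> + sign_value 0 (flips \<epsilon> \<epsilon>') magnitude u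
      \<le> max (T (l + 1) m n + T l (m + 1) (n + 1) - a1) (T l m (n + 1) + T (l + 1) (m + 1) n - a2)"
    using pair_value_eq_sign_value(2,3)[of l m n \<delta> \<delta>'] pair_value_le_tau(2,3)[of l m n \<delta> \<delta>']
      common val by auto
  ultimately show ?thesis by linarith
qed

lemma rhs_term_le_lhs:
  assumes "k \<le> 2"
  shows "common_part l m n (flips \<epsilon> \<epsilon>') \<epsilon> + sign_value k (flips \<epsilon> \<epsilon>') magnitude (sign_of \<epsilon>)
    \<le> T l (m + 1) n + T (l + 1) m (n + 1) - a2"
proof -
  obtain u where u: "u \<in> signs (flips \<epsilon> \<epsilon>')" and le: "\<forall>t\<in>signs (flips \<epsilon> \<epsilon>'). \<forall>k\<le>2.
       sign_value k (flips \<epsilon> \<epsilon>') magnitude t \<le> sign_value 0 (flips \<epsilon> \<epsilon>') magnitude u"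
    using flip_sign_value_max[of \<epsilon> \<epsilon>'] by blast
  obtain \<delta> \<delta>' where flips: "flips \<delta> \<delta>' = flips \<epsilon> \<epsilon>'"
    and common: "common_part l m n (flips \<delta> \<delta>') \<delta> = common_part l m n (flips \<epsilon> \<epsilon>') \<epsilon>"
    and val: "\<forall>k. sign_value k (flips \<delta> \<delta>') magnitude (sign_of \<delta>) = sign_value k (flips \<epsilon> \<epsilon>') magnitude u"
    by (rule flips_realize_signs[OF u, where l = l and m = m and n = n])
  have "sign_value k (flips \<epsilon> \<epsilon>') magnitude (sign_of \<epsilon>) \<le> sign_value 0 (flips \<epsilon> \<epsilon>') magnitude u"
    using le sign_of_in_signs assms by blast
  then show ?thesis
    using pair_value_eq_sign_value(1)[of l m n \<delta> \<delta>'] pair_value_le_tau(1)[of l m n \<delta> \<delta>'] common val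
    by simp
qed

lemma kp_equation:
  "T l (m + 1) n + T (l + 1) m (n + 1) - a2
    = max (T (l + 1) m n + T l (m + 1) (n + 1) - a1) (T l m (n + 1) + T (l + 1) (m + 1) n - a2)"
proof -
  obtain \<epsilon>1 \<epsilon>1' where "pair_value l m n 1 0 0 \<epsilon>1 \<epsilon>1' = T (l + 1) m n + T l (m + 1) (n + 1)"
    using pair_value_attains_tau(2) by blast
  then have "T (l + 1) m n + T l (m + 1) (n + 1) - a1 \<le> T l (m + 1) n + T (l + 1) m (n + 1) - a2"
    using pair_value_eq_sign_value(2)[of l m n \<epsilon>1 \<epsilon>1'] rhs_term_le_lhs[where k = 1 and \<epsilon> = \<epsilon>1 and \<epsilon>' = \<epsilon>1'] by simp
  moreover obtain \<epsilon>2 \<epsilon>2' where "pair_value l m n 0 0 1 \<epsilon>2 \<epsilon>2' = T l m (n + 1) + T (l + 1) (m + 1) n"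
    using pair_value_attains_tau(3) by blast
  then have "T l m (n + 1) + T (l + 1) (m + 1) n - a2 \<le> T l (m + 1) n + T (l + 1) m (n + 1) - a2"
    using pair_value_eq_sign_value(3)[of l m n \<epsilon>2 \<epsilon>2'] rhs_term_le_lhs[where k = 2 and \<epsilon> = \<epsilon>2 and \<epsilon>' = \<epsilon>2'] by simp
  ultimately show ?thesis using lhs_le_rhs[of l m n] by linarith
qed

end

theorem theorem2:
  fixes N :: nat and a1 a2 a3 :: real and p c c' :: "nat \<Rightarrow> real" and s l m n :: int
  assumes "N \<ge> 1" and "a1 > a2" and "a2 > a3"
  shows "tau N a1 a2 a3 p c c' s l (m + 1) n + tau N a1 a2 a3 p c c' s (l + 1) m (n + 1) - a2
       = max (tau N a1 a2 a3 p c c' s (l + 1) m n + tau N a1 a2 a3 p c c' s l (m + 1) (n + 1) - a1)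
             (tau N a1 a2 a3 p c c' s l m (n + 1) + tau N a1 a2 a3 p c c' s (l + 1) (m + 1) n - a2)"
proof -
  interpret kp a1 a2 a3 N p c c' s
    by unfold_locales (use assms in auto)
  show ?thesis by (rule kp_equation)
qed

end
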